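(* Let $q>0$, let $f$ be a $q$-concave function on $\mathbb R^n$ which is not $m$-isolated, for some $1\le m\le n$. If there exists an $m$-Dynkin vector for $f$, then $C(f)\ne\varnothing$.
   Context: A twice differentiable $f:\mathbb R^n\to\mathbb R$ is $q$-concave if $\frac{\partial f}{\partial x_i}(0)=0$ for all $i$, $\frac{\partial^2 f}{\partial x_i\partial x_j}\ge0$ everywhere for all $i,j$, and $\frac{\partial^2 f}{\partial x_i^2}\ge q$ everywhere for all $i$. With $e_m$ the $m$-th standard basis vector, $f$ is $m$-isolated if $\frac{\partial f}{\partial x_k}(e_m)=0$ for all $k\ne m$. A nonzero $d\in\mathbb Z^n$ is an $m$-Dynkin vector for $f$ if $0\le\frac{\partial f}{\partial x_m}(d)\le q$ and $\frac{\partial f}{\partial x_j}(d)=0$ for all $j\ne m$. $H_n=\{x:\sum x_i=0\}$; $C(f)$ is the set of $h\in H_n\setminus\{0\}$ with either all $\partial f/\partial x_i(h)\le0$ or all $\ge0$. *)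

theory Defs
  imports "HOL-Analysis.Analysis"
begin

text \<open>Points of R^n are vectors of type real^'n (the index type 'n has n elements).
  The i-th standard basis vector is axis i 1.\<close>

definition pd :: "(real^'n \<Rightarrow> real) \<Rightarrow> 'n \<Rightarrow> real^'n \<Rightarrow> real" where
  "pd f i x = deriv (\<lambda>t. f (x + t *\<^sub>R axis i 1)) 0"

definition twice_differentiable :: "(real^'n \<Rightarrow> real) \<Rightarrow> bool" where
  "twice_differentiable f \<longleftrightarrow>
     (\<forall>x. f differentiable at x) \<and> (\<forall>i x. pd f i differentiable at x)"

definition q_concave :: "real \<Rightarrow> (real^'n \<Rightarrow> real) \<Rightarrow> bool" where
  "q_concave q f \<longleftrightarrow>
     (\<forall>i. pd f i 0 = 0) \<and>
     (\<forall>i j x. pd (pd f j) i x \<ge> 0) \<and>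
     (\<forall>i x. pd (pd f i) i x \<ge> q)"

definition m_isolated :: "(real^'n \<Rightarrow> real) \<Rightarrow> 'n \<Rightarrow> bool" where
  "m_isolated f m \<longleftrightarrow> (\<forall>k. k \<noteq> m \<longrightarrow> pd f k (axis m 1) = 0)"

definition dynkin_vector :: "real \<Rightarrow> (real^'n \<Rightarrow> real) \<Rightarrow> 'n \<Rightarrow> real^'n \<Rightarrow> bool" where
  "dynkin_vector q f m d \<longleftrightarrow>
     d \<noteq> 0 \<and> (\<forall>i. d $ i \<in> \<int>) \<and>
     0 \<le> pd f m d \<and> pd f m d \<le> q \<and>
     (\<forall>j. j \<noteq> m \<longrightarrow> pd f j d = 0)"

definition H :: "(real^'n) set" where
  "H = {x. (\<Sum>i\<in>UNIV. x $ i) = 0}"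

definition C :: "(real^'n \<Rightarrow> real) \<Rightarrow> (real^'n) set" where
  "C f = {h \<in> H - {0}. (\<forall>i. pd f i h \<le> 0) \<or> (\<forall>i. pd f i h \<ge> 0)}"

end

theory Submission
  imports Defs
begin

text \<open>Let \<open>s\<close> be the (integral) coordinate sum of an \<open>m\<close>-Dynkin vector \<open>d\<close> and put
  \<open>h = d - s e\<^sub>m \<in> H\<close>. Since all second partials are nonnegative and the pure \<open>m\<close>-th one is
  at least \<open>q\<close>, every first partial derivative is nondecreasing along \<open>e\<^sub>m\<close>, the \<open>m\<close>-th one
  growing by at least \<open>q\<close> per unit. Comparing \<open>h\<close> with \<open>d\<close>, the gradient at \<open>h\<close> is \<open>\<ge> 0\<close> if \<open>s \<le> 0\<close> and
  \<open>\<le> 0\<close> if \<open>s \<ge> 1\<close>, so \<open>h \<in> C(f)\<close> unless \<open>h = 0\<close>. In that case \<open>d = s e\<^sub>m\<close>, and the same growth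
  estimate between \<open>0\<close> and \<open>d\<close> forces \<open>s = 1\<close>, i.e. \<open>f\<close> is \<open>m\<close>-isolated.\<close>

lemma has_real_derivative_pd_along_axis:
  fixes g :: "real^'n \<Rightarrow> real"
  assumes "g differentiable at (x + t *\<^sub>R axis i 1)"
  shows "((\<lambda>t. g (x + t *\<^sub>R axis i 1)) has_real_derivative pd g i (x + t *\<^sub>R axis i 1)) (at t)"
proof -
  define y where "y = x + t *\<^sub>R axis i 1"
  have "(g \<circ> (\<lambda>s. y + s *\<^sub>R axis i 1)) differentiable at 0"
    using assms unfolding y_def by (intro differentiable_chain_at derivative_intros) simp
  then have "((\<lambda>s. g (y + s *\<^sub>R axis i 1)) has_real_derivative pd g i y) (at 0)"
    unfolding pd_def by (simp add: DERIV_deriv_iff_real_differentiable o_def)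
  moreover have "(\<lambda>s. g (y + s *\<^sub>R axis i 1)) = (\<lambda>s. g (x + (s + t) *\<^sub>R axis i 1))"
    unfolding y_def by (simp add: scaleR_add_left algebra_simps)
  ultimately show ?thesis
    using DERIV_shift[where f = "\<lambda>u. g (x + u *\<^sub>R axis i 1)" and x = 0 and z = t]
    by (simp add: y_def)
qed

lemma increment_along_axis_ge:
  fixes g :: "real^'n \<Rightarrow> real"
  assumes "\<forall>y. g differentiable at y"
    and "\<forall>y. c \<le> pd g i y"
    and "0 \<le> t"
  shows "c * t \<le> g (x + t *\<^sub>R axis i 1) - g x"
proof (cases "t = 0")
  case False
  with assms(3) have "0 < t" by simp
  then obtain z where "g (x + t *\<^sub>R axis i 1) - g (x + 0 *\<^sub>R axis i 1)
      = (t - 0) * pd g i (x + z *\<^sub>R axis i 1)"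
    using MVT2[of 0 t "\<lambda>t. g (x + t *\<^sub>R axis i 1)" "\<lambda>t. pd g i (x + t *\<^sub>R axis i 1)"]
      assms(1) has_real_derivative_pd_along_axis by blast
  then show ?thesis
    using assms(2) \<open>0 < t\<close> by (simp add: mult.commute mult_left_mono)
qed simp

lemma q_concave_pd_mono_along_axis:
  assumes "twice_differentiable f" "q_concave q f" "0 \<le> t"
  shows "pd f j x \<le> pd f j (x + t *\<^sub>R axis i 1)"
  using increment_along_axis_ge[of "pd f j" 0 i t x] assms
  unfolding twice_differentiable_def q_concave_def by simp

lemma q_concave_pd_increment_along_axis:
  assumes "twice_differentiable f" "q_concave q f" "0 \<le> t"
  shows "q * t \<le> pd f i (x + t *\<^sub>R axis i 1) - pd f i x"
  using increment_along_axis_ge[of "pd f i" q i t x] assms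
  unfolding twice_differentiable_def q_concave_def by simp

lemma dynkin_vector_pd_nonneg:
  assumes "dynkin_vector q f m d"
  shows "0 \<le> pd f j d"
  using assms unfolding dynkin_vector_def by (cases "j = m") auto

lemma dynkin_vector_axis_shift_pd_nonneg:
  assumes "twice_differentiable f" "q_concave q f" "dynkin_vector q f m d" "s \<le> 0"
  shows "0 \<le> pd f j (d - s *\<^sub>R axis m 1)"
  using q_concave_pd_mono_along_axis[OF assms(1,2), of "-s" j d m]
    dynkin_vector_pd_nonneg[OF assms(3), of j] assms(4) by simp

lemma dynkin_vector_axis_shift_pd_nonpos:
  assumes "twice_differentiable f" "q_concave q f" "dynkin_vector q f m d" "q > 0" "1 \<le> s"
  shows "pd f j (d - s *\<^sub>R axis m 1) \<le> 0"
proof -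
  let ?h = "d - s *\<^sub>R axis m 1"
  have d: "?h + s *\<^sub>R axis m 1 = d" by simp
  show ?thesis
  proof (cases "j = m")
    case True
    have "q * s \<le> pd f m d - pd f m ?h"
      using q_concave_pd_increment_along_axis[OF assms(1,2), of s m ?h] assms(5) d by simp
    moreover have "q \<le> q * s"
      using assms(4,5) by simp
    moreover have "pd f m d \<le> q"
      using assms(3) unfolding dynkin_vector_def by simp
    ultimately show ?thesis
      using True by simp
  next
    case False
    then have "pd f j d = 0"
      using assms(3) unfolding dynkin_vector_def by simp
    then show ?thesis
      using q_concave_pd_mono_along_axis[OF assms(1,2), of s j ?h m] assms(5) d by simp
  qed
qed

lemma dynkin_vector_on_axis:
  assumes "twice_differentiable f" "q_concave q f" "q > 0" "dynkin_vector q f m (s *\<^sub>R axis m 1)"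
  shows "s = 1"
proof -
  have "pd f m 0 = 0" and "0 \<le> pd f m (s *\<^sub>R axis m 1)" and "pd f m (s *\<^sub>R axis m 1) \<le> q"
    using assms(2,4) unfolding q_concave_def dynkin_vector_def by auto
  have "s = (s *\<^sub>R axis m 1) $ m"
    by simp
  with assms(4) have "s \<in> \<int>"
    unfolding dynkin_vector_def by metis
  moreover have "s \<noteq> 0"
    using assms(4) unfolding dynkin_vector_def by auto
  ultimately have "s \<le> -1 \<or> 1 \<le> s"
    by (auto elim!: Ints_cases)
  then consider "s \<le> -1" | "1 \<le> s"
    by blast
  then show ?thesis
  proof cases
    case 1
    have "q * -s \<le> pd f m (s *\<^sub>R axis m 1 + (-s) *\<^sub>R axis m 1) - pd f m (s *\<^sub>R axis m 1)"
      using q_concave_pd_increment_along_axis[OF assms(1,2), of "-s" m "s *\<^sub>R axis m 1"] 1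
      by linarith
    moreover have "0 < q * -s"
      using assms(3) 1 by (simp add: mult_pos_neg)
    ultimately show ?thesis
      using \<open>pd f m 0 = 0\<close> \<open>0 \<le> pd f m (s *\<^sub>R axis m 1)\<close> by simp
  next
    case 2
    have "q * s \<le> pd f m (0 + s *\<^sub>R axis m 1) - pd f m 0"
      using q_concave_pd_increment_along_axis[OF assms(1,2), of s m 0] 2 by linarith
    then have "q * s \<le> q * 1"
      using \<open>pd f m 0 = 0\<close> \<open>pd f m (s *\<^sub>R axis m 1) \<le> q\<close> by simp
    then show ?thesis
      using assms(3) 2 by simp
  qed
qed

lemma axis_shift_by_coordinate_sum_in_H:
  "d - (\<Sum>i\<in>UNIV. d $ i) *\<^sub>R axis m 1 \<in> H"
  unfolding H_def by (simp add: sum_subtractf axis_def flip: sum_distrib_left)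

theorem lemma3:
  fixes f :: "real^'n \<Rightarrow> real" and q :: real and m :: 'n
  assumes "q > 0"
    and "twice_differentiable f"
    and "q_concave q f"
    and "\<not> m_isolated f m"
    and "\<exists>d. dynkin_vector q f m d"
  shows "C f \<noteq> {}"
proof -
  obtain d where d: "dynkin_vector q f m d"
    using assms(5) by blast
  define s where "s = (\<Sum>i\<in>UNIV. d $ i)"
  define h where "h = d - s *\<^sub>R axis m 1"
  have "h \<noteq> 0"
  proof
    assume "h = 0"
    then have "dynkin_vector q f m (s *\<^sub>R axis m 1)"
      using d by (simp add: h_def)
    then have "s = 1"
      by (rule dynkin_vector_on_axis[OF assms(2,3,1)])
    then have "d = axis m 1"
      using \<open>h = 0\<close> by (simp add: h_def)
    with d assms(4) show False
      unfolding m_isolated_def dynkin_vector_def by simp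
  qed
  have "s \<in> \<int>"
    using d unfolding s_def dynkin_vector_def by (intro Ints_sum) blast
  then have "s \<le> 0 \<or> 1 \<le> s"
    by (auto elim!: Ints_cases)
  then have "(\<forall>j. pd f j h \<le> 0) \<or> (\<forall>j. 0 \<le> pd f j h)"
    using dynkin_vector_axis_shift_pd_nonneg[OF assms(2,3) d]
      dynkin_vector_axis_shift_pd_nonpos[OF assms(2,3) d assms(1)] unfolding h_def by blast
  with \<open>h \<noteq> 0\<close> have "h \<in> C f"
    using axis_shift_by_coordinate_sum_in_H unfolding C_def h_def s_def by auto
  then show ?thesis by blast
qed

end
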